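(* Let $D$ be a pv-monoid (idempotent, with symmetric valuation function), $P$ a nonempty finite set of ports, $I,J$ nonempty finite index sets and $m_i$ ($i\in I$), $m'_j$ ($j\in J$) full monomials over $P$. Then \[\Big(\sum_{i\in I}m_i\Big)\uplus\Big(\sum_{j\in J}m'_j\Big)\equiv\begin{cases}\sum_{i\in I}m_i+\sum_{j\in J}m'_j&\text{if } m_i\not\equiv m'_j\text{ for every } i\in I,\ j\in J,\\ 0&\text{otherwise.}\end{cases}\]
   Context: A pv-monoid $(D,\oplus,\mathrm{val},\otimes,0,1)$ consists of a commutative monoid $(D,\oplus,0)$, a map $\mathrm{val}$ from nonempty finite sequences over $D$ to $D$ with $\mathrm{val}(d)=d$ and $\mathrm{val}(d_1,\dots,d_n)=0$ whenever some $d_i=0$, a binary operation $\otimes$ and an element $1$ with $\mathrm{val}(1,\dots,1)=1$, $0\otimes d=d\otimes0=0$, $1\otimes d=d\otimes1=d$. Standing assumption: $D$ is idempotent and $\mathrm{val}$ is symmetric. An empty $\oplus$-sum is $0$. $I(P)$ is the set of nonempty subsets of $P$, $C(P)$ the set of nonempty subsets of $I(P)$. PIL formulas: $\phi::=true\mid p\mid\overline{\phi}\mid\phi\vee\phi$ ($p\in P$), $\alpha\models_i p$ iff $p\in\alpha$, negation and disjunction as usual, $\wedge$ via De Morgan. A full monomial is a PIL formula $\bigwedge_{p\in P_+}p\wedge\bigwedge_{p\in P_-}\overline p$ with $P_+\cup P_-=P$, $P_+\cap P_-=\emptyset$. PCL formulas: $f::=true\mid\phi\mid\neg f\mid f\sqcup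 f\mid f+f$; $\gamma\models\phi$ iff every $\alpha\in\gamma$ satisfies $\phi$; $\neg,\sqcup$ are complement and union; $\gamma\models f_1+f_2$ iff $\gamma=\gamma_1\cup\gamma_2$ with $\gamma_1,\gamma_2\in C(P)$, $\gamma_1\models f_1,\gamma_2\models f_2$. $\sum$ is $+$-combination. Weighted formulas: constants $d\in D$, PCL formulas, $\oplus,\otimes,\uplus$ and $*$; semantics $\|\cdot\|:C(P)\to D$ with $\|d\|(\gamma)=d$, $\|f\|(\gamma)=1$ if $\gamma\models f$ and $0$ otherwise, $\oplus,\otimes$ pointwise, $\|\zeta_1\uplus\zeta_2\|(\gamma)=\bigoplus(\|\zeta_1\|(\gamma_1)\otimes\|\zeta_2\|(\gamma_2))$ over disjoint $\gamma_1,\gamma_2\in C(P)$ with union $\gamma$. $\equiv$ means equality of semantics on all of $C(P)$. *)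

theory Defs
  imports "HOL-Library.Multiset"
begin

record 'd pvm =
  pplus :: "'d \<Rightarrow> 'd \<Rightarrow> 'd"
  pval  :: "'d list \<Rightarrow> 'd"
  ptimes :: "'d \<Rightarrow> 'd \<Rightarrow> 'd"
  pzero :: 'd
  pone  :: 'd

definition pv_monoid :: "'d pvm \<Rightarrow> bool" where
  "pv_monoid D \<longleftrightarrow>
     (\<forall>a b c. pplus D (pplus D a b) c = pplus D a (pplus D b c)) \<and>
     (\<forall>a b. pplus D a b = pplus D b a) \<and>
     (\<forall>a. pplus D (pzero D) a = a) \<and>
     (\<forall>d. pval D [d] = d) \<and>
     (\<forall>ds. ds \<noteq> [] \<and> pzero D \<in> set ds \<longrightarrow> pval D ds = pzero D) \<and>
     (\<forall>n. n \<ge> 1 \<longrightarrow> pval D (replicate n (pone D)) = pone D) \<and>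
     (\<forall>d. ptimes D (pzero D) d = pzero D \<and> ptimes D d (pzero D) = pzero D) \<and>
     (\<forall>d. ptimes D (pone D) d = d \<and> ptimes D d (pone D) = d)"

definition pv_idempotent :: "'d pvm \<Rightarrow> bool" where
  "pv_idempotent D \<longleftrightarrow> (\<forall>d. pplus D d d = d)"

definition pv_symmetric_val :: "'d pvm \<Rightarrow> bool" where
  "pv_symmetric_val D \<longleftrightarrow>
     (\<forall>ds es. ds \<noteq> [] \<and> mset ds = mset es \<longrightarrow> pval D ds = pval D es)"

definition bigplus :: "'d pvm \<Rightarrow> ('a \<Rightarrow> 'd) \<Rightarrow> 'a set \<Rightarrow> 'd" where
  "bigplus D f A = Finite_Set.fold (\<lambda>x acc. pplus D (f x) acc) (pzero D) A"

definition IP :: "'p set \<Rightarrow> 'p set set" where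
  "IP P = {\<alpha>. \<alpha> \<noteq> {} \<and> \<alpha> \<subseteq> P}"

definition CP :: "'p set \<Rightarrow> 'p set set set" where
  "CP P = {\<gamma>. \<gamma> \<noteq> {} \<and> \<gamma> \<subseteq> IP P}"

datatype 'p pil = PTrue | PVar 'p | PNeg "'p pil" | POr "'p pil" "'p pil"

definition PAnd :: "'p pil \<Rightarrow> 'p pil \<Rightarrow> 'p pil" where
  "PAnd a b = PNeg (POr (PNeg a) (PNeg b))"

fun pil_sat :: "'p set \<Rightarrow> 'p pil \<Rightarrow> bool" where
  "pil_sat \<alpha> PTrue = True"
| "pil_sat \<alpha> (PVar p) = (p \<in> \<alpha>)"
| "pil_sat \<alpha> (PNeg \<phi>) = (\<not> pil_sat \<alpha> \<phi>)"
| "pil_sat \<alpha> (POr \<phi> \<psi>) = (pil_sat \<alpha> \<phi> \<or> pil_sat \<alpha> \<psi>)"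

fun pil_conj :: "'p pil list \<Rightarrow> 'p pil" where
  "pil_conj [] = PTrue"
| "pil_conj [\<phi>] = \<phi>"
| "pil_conj (\<phi> # \<psi> # \<phi>s) = PAnd \<phi> (pil_conj (\<psi> # \<phi>s))"

definition is_full_monomial :: "'p set \<Rightarrow> 'p pil \<Rightarrow> bool" where
  "is_full_monomial P \<phi> \<longleftrightarrow>
     (\<exists>ps ns. set ps \<union> set ns = P \<and> set ps \<inter> set ns = {} \<and> distinct (ps @ ns) \<and>
        \<phi> = pil_conj (map PVar ps @ map (\<lambda>p. PNeg (PVar p)) ns))"

datatype 'p pcl = CTrue | CPil "'p pil" | CNeg "'p pcl" | CUnion "'p pcl" "'p pcl"
  | CPlus "'p pcl" "'p pcl"

fun pcl_sat :: "'p set \<Rightarrow> 'p set set \<Rightarrow> 'p pcl \<Rightarrow> bool" where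
  "pcl_sat P \<gamma> CTrue = True"
| "pcl_sat P \<gamma> (CPil \<phi>) = (\<forall>\<alpha>\<in>\<gamma>. pil_sat \<alpha> \<phi>)"
| "pcl_sat P \<gamma> (CNeg f) = (\<not> pcl_sat P \<gamma> f)"
| "pcl_sat P \<gamma> (CUnion f g) = (pcl_sat P \<gamma> f \<or> pcl_sat P \<gamma> g)"
| "pcl_sat P \<gamma> (CPlus f g) = (\<exists>\<gamma>1 \<gamma>2. \<gamma>1 \<in> CP P \<and> \<gamma>2 \<in> CP P \<and> \<gamma> = \<gamma>1 \<union> \<gamma>2 \<and>
                                   pcl_sat P \<gamma>1 f \<and> pcl_sat P \<gamma>2 g)"

fun pcl_sum :: "'p pcl list \<Rightarrow> 'p pcl" where
  "pcl_sum [] = CTrue"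
| "pcl_sum [f] = f"
| "pcl_sum (f # g # fs) = CPlus f (pcl_sum (g # fs))"

datatype ('p, 'd) wf = WConst 'd | WPcl "'p pcl" | WPlus "('p,'d) wf" "('p,'d) wf"
  | WTimes "('p,'d) wf" "('p,'d) wf" | WUplus "('p,'d) wf" "('p,'d) wf"

fun wsem :: "'d pvm \<Rightarrow> 'p set \<Rightarrow> ('p, 'd) wf \<Rightarrow> 'p set set \<Rightarrow> 'd" where
  "wsem D P (WConst d) \<gamma> = d"
| "wsem D P (WPcl f) \<gamma> = (if pcl_sat P \<gamma> f then pone D else pzero D)"
| "wsem D P (WPlus z1 z2) \<gamma> = pplus D (wsem D P z1 \<gamma>) (wsem D P z2 \<gamma>)"
| "wsem D P (WTimes z1 z2) \<gamma> = ptimes D (wsem D P z1 \<gamma>) (wsem D P z2 \<gamma>)"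
| "wsem D P (WUplus z1 z2) \<gamma> =
     bigplus D (\<lambda>(\<gamma>1, \<gamma>2). ptimes D (wsem D P z1 \<gamma>1) (wsem D P z2 \<gamma>2))
       {(\<gamma>1, \<gamma>2). \<gamma>1 \<in> CP P \<and> \<gamma>2 \<in> CP P \<and> \<gamma>1 \<inter> \<gamma>2 = {} \<and> \<gamma>1 \<union> \<gamma>2 = \<gamma>}"

definition wequiv :: "'d pvm \<Rightarrow> 'p set \<Rightarrow> ('p, 'd) wf \<Rightarrow> ('p, 'd) wf \<Rightarrow> bool" where
  "wequiv D P z1 z2 \<longleftrightarrow> (\<forall>\<gamma>\<in>CP P. wsem D P z1 \<gamma> = wsem D P z2 \<gamma>)"

end

theory Submission
  imports Defs
begin

text \<open>A full monomial over \<open>P\<close> is satisfied by exactly one subset of \<open>P\<close>, namely its set of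
  positive ports, so a \<open>+\<close>-sum of full monomials is satisfied by at most one configuration,
  the set of these interactions. Hence in the \<open>\<uplus>\<close>-sum at most one decomposition
  \<open>\<gamma> = \<gamma>\<^sub>1 \<union> \<gamma>\<^sub>2\<close> contributes a nonzero summand, and it exists exactly when the
  \<open>+\<close>-combination holds and the two interaction sets are disjoint. Since two full monomials
  are equivalent iff they have the same interaction (unless \<open>1 = 0\<close>, when every semantics
  vanishes), disjointness is the condition of the theorem.\<close>

lemma pplus_pzero_right: "pv_monoid D \<Longrightarrow> pplus D d (pzero D) = d"
  unfolding pv_monoid_def by (metis (no_types))

lemma bigplus_insert:
  assumes "pv_monoid D" and "finite A" and "x \<notin> A"
  shows "bigplus D f (insert x A) = pplus D (f x) (bigplus D f A)"
proof -
  interpret comp_fun_commute "\<lambda>x acc. pplus D (f x) acc"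
  proof
    fix x y
    have "pplus D (f y) (pplus D (f x) acc) = pplus D (f x) (pplus D (f y) acc)" for acc
      using \<open>pv_monoid D\<close> unfolding pv_monoid_def by metis
    then show "pplus D (f y) \<circ> pplus D (f x) = pplus D (f x) \<circ> pplus D (f y)"
      by (simp add: fun_eq_iff)
  qed
  show ?thesis
    using assms(2,3) by (simp add: bigplus_def)
qed

lemma bigplus_zero:
  assumes "pv_monoid D" and "\<forall>x\<in>A. f x = pzero D"
  shows "bigplus D f A = pzero D"
proof (cases "finite A")
  case True
  then show ?thesis
    using assms
    by (induction A rule: finite_induct)
      (simp_all add: bigplus_insert pplus_pzero_right bigplus_def[of D f "{}"])
next
  case False
  then show ?thesis by (simp add: bigplus_def)
qed

lemma bigplus_indicator_single:
  assumes "pv_monoid D" and "finite S" and "\<forall>x\<in>S. Q x \<longrightarrow> x = x\<^sub>0"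
  shows "bigplus D (\<lambda>x. if Q x then pone D else pzero D) S =
         (if x\<^sub>0 \<in> S \<and> Q x\<^sub>0 then pone D else pzero D)"
proof (cases "x\<^sub>0 \<in> S \<and> Q x\<^sub>0")
  case True
  let ?f = "\<lambda>x. if Q x then pone D else pzero D"
  have "bigplus D ?f (insert x\<^sub>0 (S - {x\<^sub>0})) = pplus D (?f x\<^sub>0) (bigplus D ?f (S - {x\<^sub>0}))"
    using assms(2) by (intro bigplus_insert[OF assms(1)]) auto
  then have "bigplus D ?f S = pplus D (?f x\<^sub>0) (bigplus D ?f (S - {x\<^sub>0}))"
    using True by (simp only: insert_Diff)
  also have "bigplus D ?f (S - {x\<^sub>0}) = pzero D"
    using assms(3) by (intro bigplus_zero[OF assms(1)]) auto
  finally show ?thesis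
    using True by (simp add: pplus_pzero_right[OF assms(1)])
next
  case False
  with assms(3) have "\<forall>x\<in>S. (if Q x then pone D else pzero D) = pzero D" by auto
  from bigplus_zero[OF assms(1) this] False show ?thesis by auto
qed

lemma CP_finite: "finite P \<Longrightarrow> finite (CP P)"
  unfolding CP_def IP_def by (rule finite_subset[of _ "Pow (Pow P)"]) auto

lemma wequiv_WPcl_iff:
  assumes "pone D \<noteq> pzero D"
  shows "wequiv D P (WPcl f) (WPcl g) \<longleftrightarrow> (\<forall>\<gamma>\<in>CP P. pcl_sat P \<gamma> f \<longleftrightarrow> pcl_sat P \<gamma> g)"
  using assms by (auto simp: wequiv_def)

lemma pcl_sat_pcl_sum_single_model:
  assumes "xs \<noteq> []" and "\<forall>x\<in>set xs. \<forall>\<gamma>\<in>CP P. pcl_sat P \<gamma> (F x) \<longrightarrow> \<gamma> = c x"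
    and "\<gamma> \<in> CP P" and "pcl_sat P \<gamma> (pcl_sum (map F xs))"
  shows "\<gamma> = (\<Union>x\<in>set xs. c x)"
  using assms
proof (induction xs arbitrary: \<gamma> rule: induct_list012)
  case (3 x y zs)
  then obtain \<gamma>\<^sub>1 \<gamma>\<^sub>2 where "\<gamma>\<^sub>1 \<in> CP P" "\<gamma>\<^sub>2 \<in> CP P" "\<gamma> = \<gamma>\<^sub>1 \<union> \<gamma>\<^sub>2"
    and "pcl_sat P \<gamma>\<^sub>1 (F x)" "pcl_sat P \<gamma>\<^sub>2 (pcl_sum (map F (y # zs)))"
    by auto
  with "3.IH"(2) "3.prems"(2) show ?case by auto
qed auto

lemma wsem_WUplus_WPcl:
  assumes "pv_monoid D"
  shows "wsem D P (WUplus (WPcl f) (WPcl g)) \<gamma> =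
    bigplus D (\<lambda>x. if pcl_sat P (fst x) f \<and> pcl_sat P (snd x) g then pone D else pzero D)
      {(\<gamma>\<^sub>1, \<gamma>\<^sub>2). \<gamma>\<^sub>1 \<in> CP P \<and> \<gamma>\<^sub>2 \<in> CP P \<and> \<gamma>\<^sub>1 \<inter> \<gamma>\<^sub>2 = {} \<and> \<gamma>\<^sub>1 \<union> \<gamma>\<^sub>2 = \<gamma>}"
proof -
  have "ptimes D (if p then pone D else pzero D) (if q then pone D else pzero D) =
        (if p \<and> q then pone D else pzero D)" for p q
    using assms unfolding pv_monoid_def by auto
  then show ?thesis
    by (simp add: case_prod_unfold)
qed

lemma wsem_WUplus_WPcl_single_models:
  assumes "pv_monoid D" and "finite P"
    and f: "\<forall>\<gamma>\<in>CP P. pcl_sat P \<gamma> f \<longrightarrow> \<gamma> = a"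
    and g: "\<forall>\<gamma>\<in>CP P. pcl_sat P \<gamma> g \<longrightarrow> \<gamma> = b"
  shows "wsem D P (WUplus (WPcl f) (WPcl g)) \<gamma> =
         (if a \<inter> b = {} then wsem D P (WPcl (CPlus f g)) \<gamma> else pzero D)"
proof -
  define S where "S = {(\<gamma>\<^sub>1, \<gamma>\<^sub>2). \<gamma>\<^sub>1 \<in> CP P \<and> \<gamma>\<^sub>2 \<in> CP P \<and> \<gamma>\<^sub>1 \<inter> \<gamma>\<^sub>2 = {} \<and> \<gamma>\<^sub>1 \<union> \<gamma>\<^sub>2 = \<gamma>}"
  define Q where "Q = (\<lambda>x. pcl_sat P (fst x) f \<and> pcl_sat P (snd x) g)"
  have sem: "wsem D P (WUplus (WPcl f) (WPcl g)) \<gamma> = bigplus D (\<lambda>x. if Q x then pone D else pzero D) S"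
    unfolding wsem_WUplus_WPcl[OF \<open>pv_monoid D\<close>] S_def Q_def ..
  have "finite S"
    by (rule finite_subset[of _ "CP P \<times> CP P"]) (auto simp: S_def CP_finite[OF \<open>finite P\<close>])
  moreover have "\<forall>x\<in>S. Q x \<longrightarrow> x = (a, b)"
    using f g unfolding S_def Q_def by auto
  ultimately have "wsem D P (WUplus (WPcl f) (WPcl g)) \<gamma> =
      (if (a, b) \<in> S \<and> Q (a, b) then pone D else pzero D)"
    unfolding sem by (rule bigplus_indicator_single[OF \<open>pv_monoid D\<close>])
  moreover have "(a, b) \<in> S \<and> Q (a, b) \<longleftrightarrow> a \<inter> b = {} \<and> pcl_sat P \<gamma> (CPlus f g)"
    using f g unfolding S_def Q_def by auto
  ultimately show ?thesis
    by (simp del: pcl_sat.simps)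
qed

lemma pil_sat_pil_conj: "pil_sat \<alpha> (pil_conj \<phi>s) \<longleftrightarrow> (\<forall>\<phi>\<in>set \<phi>s. pil_sat \<alpha> \<phi>)"
  by (induction \<phi>s rule: pil_conj.induct) (auto simp: PAnd_def)

definition monomial_interaction :: "'p set \<Rightarrow> 'p pil \<Rightarrow> 'p set" where
  "monomial_interaction P m = (THE \<alpha>. \<alpha> \<subseteq> P \<and> pil_sat \<alpha> m)"

lemma full_monomial_unique_model:
  assumes "is_full_monomial P m"
  shows "\<exists>!\<alpha>. \<alpha> \<subseteq> P \<and> pil_sat \<alpha> m"
proof -
  obtain ps ns where P: "set ps \<union> set ns = P" and disj: "set ps \<inter> set ns = {}"
    and m: "m = pil_conj (map PVar ps @ map (\<lambda>p. PNeg (PVar p)) ns)"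
    using assms unfolding is_full_monomial_def by blast
  have "pil_sat \<beta> m \<longleftrightarrow> \<beta> = set ps" if "\<beta> \<subseteq> P" for \<beta>
  proof -
    have "pil_sat \<beta> m \<longleftrightarrow> (\<forall>p\<in>set ps. p \<in> \<beta>) \<and> (\<forall>p\<in>set ns. p \<notin> \<beta>)"
      by (simp add: m pil_sat_pil_conj ball_Un)
    then show ?thesis
      using that P disj by auto
  qed
  then show ?thesis
    using P by auto
qed

lemma full_monomial_interaction:
  assumes "is_full_monomial P m"
  shows "monomial_interaction P m \<subseteq> P" and "pil_sat (monomial_interaction P m) m"
  using theI'[OF full_monomial_unique_model[OF assms]]
  unfolding monomial_interaction_def by auto

lemma full_monomial_sat_iff:
  assumes "is_full_monomial P m" and "\<alpha> \<subseteq> P"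
  shows "pil_sat \<alpha> m \<longleftrightarrow> \<alpha> = monomial_interaction P m"
  using full_monomial_unique_model[OF assms(1)] full_monomial_interaction[OF assms(1)] assms(2)
  by blast

lemma pcl_sat_CPil_full_monomial:
  assumes "is_full_monomial P m" and "\<gamma> \<in> CP P"
  shows "pcl_sat P \<gamma> (CPil m) \<longleftrightarrow> \<gamma> = {monomial_interaction P m}"
proof -
  have "\<gamma> \<noteq> {}" and "\<forall>\<alpha>\<in>\<gamma>. \<alpha> \<subseteq> P"
    using assms(2) by (auto simp: CP_def IP_def)
  then have "pcl_sat P \<gamma> (CPil m) \<longleftrightarrow> (\<forall>\<alpha>\<in>\<gamma>. \<alpha> = monomial_interaction P m)"
    using full_monomial_sat_iff[OF assms(1)] by simp
  also have "\<dots> \<longleftrightarrow> \<gamma> = {monomial_interaction P m}"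
    using \<open>\<gamma> \<noteq> {}\<close> by auto
  finally show ?thesis .
qed

lemma full_monomials_wequiv_iff:
  assumes "pone D \<noteq> pzero D" and m: "is_full_monomial P m" and m': "is_full_monomial P m'"
  shows "wequiv D P (WPcl (CPil m)) (WPcl (CPil m')) \<longleftrightarrow>
         monomial_interaction P m = monomial_interaction P m'"
proof -
  let ?\<alpha> = "monomial_interaction P m" and ?\<beta> = "monomial_interaction P m'"
  have in_CP: "{monomial_interaction P m\<^sub>0} \<in> CP P \<longleftrightarrow> monomial_interaction P m\<^sub>0 \<noteq> {}"
    if "is_full_monomial P m\<^sub>0" for m\<^sub>0
    using full_monomial_interaction(1)[OF that] by (auto simp: CP_def IP_def)
  have "(\<forall>\<gamma>\<in>CP P. \<gamma> = {?\<alpha>} \<longleftrightarrow> \<gamma> = {?\<beta>}) \<longleftrightarrow> ?\<alpha> = ?\<beta>"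
  proof
    assume same_models: "\<forall>\<gamma>\<in>CP P. \<gamma> = {?\<alpha>} \<longleftrightarrow> \<gamma> = {?\<beta>}"
    show "?\<alpha> = ?\<beta>"
    proof (cases "?\<alpha> = {} \<and> ?\<beta> = {}")
      case False
      then have "{?\<alpha>} \<in> CP P \<or> {?\<beta>} \<in> CP P"
        using in_CP[OF m] in_CP[OF m'] by blast
      then show ?thesis
        using same_models by blast
    qed simp
  qed simp
  then show ?thesis
    unfolding wequiv_WPcl_iff[OF assms(1)]
    using pcl_sat_CPil_full_monomial[OF m] pcl_sat_CPil_full_monomial[OF m'] by simp
qed

lemma pcl_sat_monomial_sum_single_model:
  assumes "ms \<noteq> []" and "\<forall>m\<in>set ms. is_full_monomial P m"
  shows "\<forall>\<gamma>\<in>CP P. pcl_sat P \<gamma> (pcl_sum (map CPil ms)) \<longrightarrow> \<gamma> = monomial_interaction P ` set ms"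
proof -
  have models: "\<forall>m\<in>set ms. \<forall>\<gamma>\<in>CP P. pcl_sat P \<gamma> (CPil m) \<longrightarrow> \<gamma> = {monomial_interaction P m}"
    using pcl_sat_CPil_full_monomial assms(2) by blast
  show ?thesis
  proof (intro ballI impI)
    fix \<gamma> assume "\<gamma> \<in> CP P" and "pcl_sat P \<gamma> (pcl_sum (map CPil ms))"
    from pcl_sat_pcl_sum_single_model[OF assms(1) models this]
    show "\<gamma> = monomial_interaction P ` set ms"
      by (simp add: UNION_singleton_eq_range)
  qed
qed

theorem mainTheorem14:
  fixes D :: "'d pvm" and P :: "'p set" and ms ms' :: "'p pil list"
  assumes "pv_monoid D" and "pv_idempotent D" and "pv_symmetric_val D"
    and "finite P" and "P \<noteq> {}"
    and "ms \<noteq> []" and "ms' \<noteq> []"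
    and "\<forall>m\<in>set ms. is_full_monomial P m"
    and "\<forall>m\<in>set ms'. is_full_monomial P m"
  shows "wequiv D P
           (WUplus (WPcl (pcl_sum (map CPil ms))) (WPcl (pcl_sum (map CPil ms'))))
           (if (\<forall>m\<in>set ms. \<forall>m'\<in>set ms'. \<not> wequiv D P (WPcl (CPil m)) (WPcl (CPil m')))
            then WPcl (CPlus (pcl_sum (map CPil ms)) (pcl_sum (map CPil ms')))
            else WConst (pzero D))"
proof -
  let ?sum = "\<lambda>ms. pcl_sum (map CPil ms)" and ?\<alpha> = "monomial_interaction P"
  let ?disjoint = "?\<alpha> ` set ms \<inter> ?\<alpha> ` set ms' = {}"
  have uplus: "wsem D P (WUplus (WPcl (?sum ms)) (WPcl (?sum ms'))) \<gamma> =
      (if ?disjoint then wsem D P (WPcl (CPlus (?sum ms) (?sum ms'))) \<gamma> else pzero D)" for \<gamma>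
    by (rule wsem_WUplus_WPcl_single_models[OF assms(1,4)
          pcl_sat_monomial_sum_single_model[OF assms(6,8)]
          pcl_sat_monomial_sum_single_model[OF assms(7,9)]])
  have disjoint_iff: "?disjoint \<longleftrightarrow>
      (\<forall>m\<in>set ms. \<forall>m'\<in>set ms'. \<not> wequiv D P (WPcl (CPil m)) (WPcl (CPil m')))"
    if "pone D \<noteq> pzero D"
  proof -
    have "?disjoint \<longleftrightarrow> (\<forall>m\<in>set ms. \<forall>m'\<in>set ms'. ?\<alpha> m \<noteq> ?\<alpha> m')"
      by blast
    also have "\<dots> \<longleftrightarrow>
        (\<forall>m\<in>set ms. \<forall>m'\<in>set ms'. \<not> wequiv D P (WPcl (CPil m)) (WPcl (CPil m')))"
      using assms(8,9) by (intro ball_cong refl) (simp add: full_monomials_wequiv_iff[OF that])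
    finally show ?thesis .
  qed
  show ?thesis
    unfolding wequiv_def[of D P "WUplus (WPcl (?sum ms)) (WPcl (?sum ms'))"]
  proof
    fix \<gamma>
    show "wsem D P (WUplus (WPcl (?sum ms)) (WPcl (?sum ms'))) \<gamma> = wsem D P (if
        \<forall>m\<in>set ms. \<forall>m'\<in>set ms'. \<not> wequiv D P (WPcl (CPil m)) (WPcl (CPil m'))
        then WPcl (CPlus (?sum ms) (?sum ms')) else WConst (pzero D)) \<gamma>"
      unfolding uplus using disjoint_iff by (cases "pone D = pzero D") simp_all
  qed
qed

end
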